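(* Let $\mathbf{S}=(1^{n_1},\ast^{m_1},\ldots,1^{n_r},\ast^{m_r})$ with $r\ge1$, all $n_j,m_j\ge1$ and $n_1+\cdots+n_r=m_1+\cdots+m_r$, and let $h=h(\mathbf{S})$ be its lattice path height. Then \[ |NC_2(\mathbf{S})|\le C^{(h)}_r\le\frac{r^{r-1}}{r!}(1+h)^{r-1}, \qquad\text{where } C^{(h)}_r=\frac{1}{hr+1}\binom{(h+1)r}{r}. \]
   Context: $1^k$ denotes $k$ consecutive entries $1$ (similarly $\ast^k$); $r$ is the number of runs of $\mathbf{S}$. $NC_2(\mathbf{S})$ is the set of non-crossing pairings of the positions of $\mathbf{S}$ in which each pair joins a $1$ with a $\ast$. The lattice path of $\mathbf{S}$ starts at $(0,0)$ and, reading $\mathbf{S}$ left to right, takes a step $(1,1)$ for each $1$ and $(1,-1)$ for each $\ast$; the lattice path height $h(\mathbf{S})$ is the maximum minus the minimum of the vertical coordinates of the vertices of this path (the number of distinct vertical levels traversed by steps). *)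

theory Defs
  imports Complex_Main
begin

text \<open>Words over the alphabet {1, *}: True encodes 1, False encodes *.\<close>

definition run_word :: "nat \<Rightarrow> (nat \<Rightarrow> nat) \<Rightarrow> (nat \<Rightarrow> nat) \<Rightarrow> bool list" where
  "run_word r n m = concat (map (\<lambda>j. replicate (n j) True @ replicate (m j) False) [0..<r])"

definition NC2 :: "bool list \<Rightarrow> (nat \<times> nat) set set" where
  "NC2 S = {P. (\<forall>(i,j)\<in>P. i < j \<and> j < length S \<and> S ! i \<noteq> S ! j)
              \<and> (\<forall>k < length S. \<exists>!p. p \<in> P \<and> (fst p = k \<or> snd p = k))
              \<and> (\<forall>(a,b)\<in>P. \<forall>(c,d)\<in>P. \<not> (a < c \<and> c < b \<and> b < d))}"

definition path_pos :: "bool list \<Rightarrow> nat \<Rightarrow> int" where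
  "path_pos S k = (\<Sum>b\<leftarrow>take k S. if b then 1 else -1)"

definition lp_height :: "bool list \<Rightarrow> nat" where
  "lp_height S = nat (Max (path_pos S ` {0..length S}) - Min (path_pos S ` {0..length S}))"

definition fuss_catalan :: "nat \<Rightarrow> nat \<Rightarrow> real" where
  "fuss_catalan h r = real (((h + 1) * r) choose r) / real (h * r + 1)"

end

theory Submission
  imports Defs
begin

text \<open>
  Cut a word at the partner of its first letter. For a word 1^k Y with k > 0 this splits a
  pairing into a pairing of 1^(k-1) followed by a prefix of Y and a pairing of the rest of Y.
  The admissible partners are down-steps taken from the starting level of the lattice path;
  between two of them the path contains another run of up-steps, so distinct partners give
  prefixes of Y with distinct numbers of runs. By induction on the length, a closed path 1^k Y
  of height at most h therefore has at most R_{h+1,k+1}(rho) pairings, rho the number of runs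
  of 1s in Y, since the Raney numbers satisfy the matching convolution identity. A closed word
  beginning with * is rotated first, which keeps its height and its runs, and its first run has
  length at most h; this gives |NC_2(S)| <= R_{h+1,1}(r) = C^(h)_r. The second inequality is
  ((h+1)r choose r-1) <= ((h+1)r)^(r-1) / (r-1)!.
\<close>

section \<open>Raney numbers\<close>

text \<open>The recurrence of the Raney numbers R_{h+1,q}(r), see raney_closed_form.\<close>

fun raney :: "nat \<Rightarrow> nat \<Rightarrow> nat \<Rightarrow> nat" where
  "raney h 0 r = (if r = 0 then 1 else 0)"
| "raney h (Suc q) 0 = 1"
| "raney h (Suc q) (Suc r) = raney h q (Suc r) + raney h (Suc q + h) r"

lemma raney_0_right [simp]: "raney h q 0 = 1"
  by (cases q) auto

lemma raney_mono:
  assumes "q \<le> q'"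
  shows "raney h q r \<le> raney h q' r"
  using assms
proof (induction q' rule: dec_induct)
  case (step q')
  have "raney h q' r \<le> raney h (Suc q') r"
    by (cases r) auto
  with step.IH show ?case by simp
qed simp

lemma raney_convolution: "raney h (a + b) r = (\<Sum>j\<le>r. raney h a j * raney h b (r - j))"
proof (induction r arbitrary: a)
  case 0
  then show ?case by simp
next
  case (Suc r)
  note outer = Suc.IH
  show ?case
  proof (induction a)
    case 0
    show ?case by (simp add: sum.atMost_Suc_shift del: sum.atMost_Suc)
  next
    case (Suc a)
    have shift: "(\<Sum>j\<le>Suc r. raney h c j * raney h b (Suc r - j))
        = raney h b (Suc r) + (\<Sum>j\<le>r. raney h c (Suc j) * raney h b (r - j))" for c
      by (subst sum.atMost_Suc_shift) simp
    have "raney h (Suc a + b) (Suc r) = raney h (a + b) (Suc r) + raney h (Suc a + h + b) r"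
      by (simp add: add.commute add.left_commute)
    also have "\<dots> = (\<Sum>j\<le>Suc r. raney h a j * raney h b (Suc r - j))
                    + (\<Sum>j\<le>r. raney h (Suc a + h) j * raney h b (r - j))"
      using Suc.IH outer[of "Suc a + h"] by (simp add: algebra_simps)
    also have "\<dots> = raney h b (Suc r) + (\<Sum>j\<le>r. raney h a (Suc j) * raney h b (r - j))
                    + (\<Sum>j\<le>r. raney h (Suc a + h) j * raney h b (r - j))"
      by (simp only: shift)
    also have "\<dots> = raney h b (Suc r) + (\<Sum>j\<le>r. raney h (Suc a) (Suc j) * raney h b (r - j))"
      by (simp add: sum.distrib[symmetric] algebra_simps)
    also have "\<dots> = (\<Sum>j\<le>Suc r. raney h (Suc a) j * raney h b (Suc r - j))"
      by (simp only: shift)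
    finally show ?case .
  qed
qed

lemma raney_closed_form: "raney h q r * ((h + 1) * r + q) = q * (((h + 1) * r + q) choose r)"
proof (induction r arbitrary: q)
  case 0
  then show ?case by simp
next
  case (Suc r)
  note outer = Suc.IH
  show ?case
  proof (induction q)
    case 0
    then show ?case by simp
  next
    case (Suc q)
    define N where "N = (h + 1) * Suc r + q"
    define c where "c = N choose r"
    define d where "d = N choose Suc r"
    have "N \<ge> Suc r"
      unfolding N_def by simp
    then have cd: "(real r + 1) * real d = (real N - real r) * real c"
      unfolding c_def d_def using binomial_absorption[of r N] binomial_absorb_comp[of N r]
      by (metis of_nat_Suc of_nat_diff of_nat_mult Suc_leD add.commute)
    have IH1: "real (raney h q (Suc r)) * real N = real q * real d"
      using Suc.IH unfolding N_def d_def by (metis of_nat_mult)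
    have "raney h (Suc q + h) r * N = (Suc q + h) * c"
      using outer[of "Suc q + h"] unfolding N_def c_def by (simp add: algebra_simps)
    then have IH2: "real (raney h (Suc q + h) r) * real N = (real q + 1 + real h) * real c"
      by (metis of_nat_mult of_nat_add of_nat_Suc add.commute)
    have N: "real N = (real h + 1) * (real r + 1) + real q"
      unfolding N_def by (simp add: algebra_simps)
    have "real N * ((real (raney h q (Suc r)) + real (raney h (Suc q + h) r)) * (real N + 1))
        = (real N + 1) * (real q * real d + (real q + 1 + real h) * real c)"
      using IH1 IH2 by (simp add: algebra_simps)
    also have "\<dots> = real N * ((real q + 1) * (real c + real d))"
      using cd N by algebra
    finally have "(real (raney h q (Suc r)) + real (raney h (Suc q + h) r)) * (real N + 1)
        = (real q + 1) * (real c + real d)"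
      using \<open>N \<ge> Suc r\<close> by simp
    moreover have "(h + 1) * Suc r + Suc q choose Suc r = c + d"
      unfolding c_def d_def N_def by simp
    ultimately have "real (raney h (Suc q) (Suc r) * ((h + 1) * Suc r + Suc q))
        = real (Suc q * ((h + 1) * Suc r + Suc q choose Suc r))"
      by (simp add: N_def algebra_simps)
    then show ?case
      by (simp only: of_nat_eq_iff)
  qed
qed

lemma raney_one_eq_fuss_catalan: "real (raney h 1 r) = fuss_catalan h r"
proof -
  have "(h * r + 1) * ((h + 1) * r + 1 choose r) = ((h + 1) * r + 1) * ((h + 1) * r choose r)"
    using binomial_absorb_comp[of "(h + 1) * r + 1" r] by (simp add: algebra_simps)
  also have "(h + 1) * r + 1 choose r = raney h 1 r * ((h + 1) * r + 1)"
    using raney_closed_form[of h 1 r] by simp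
  finally have "((h + 1) * r + 1) * (raney h 1 r * (h * r + 1))
      = ((h + 1) * r + 1) * ((h + 1) * r choose r)"
    by (simp add: algebra_simps)
  then have "raney h 1 r * (h * r + 1) = (h + 1) * r choose r"
    by (simp only: mult_cancel_left) simp
  then have "real (raney h 1 r) * real (h * r + 1) = real ((h + 1) * r choose r)"
    by (metis of_nat_mult)
  then show ?thesis
    unfolding fuss_catalan_def by (simp add: eq_divide_eq del: of_nat_add of_nat_mult)
qed

lemma fuss_catalan_le:
  assumes "r \<ge> 1"
  shows "fuss_catalan h r \<le> real r ^ (r - 1) / fact r * (1 + real h) ^ (r - 1)"
proof -
  obtain k where k: "r = Suc k"
    using assms by (cases r) auto
  define n where "n = (h + 1) * r"
  have "Suc k * (n choose Suc k) = (n - k) * (n choose k)"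
    using binomial_absorption[of k n] binomial_absorb_comp[of n k] by simp
  moreover have "n - k = h * r + 1"
    unfolding n_def k by simp
  ultimately have "real r * real (n choose r) = real (h * r + 1) * real (n choose k)"
    using k by (metis of_nat_mult)
  then have "fuss_catalan h r = real (n choose k) / real r"
    using assms unfolding fuss_catalan_def n_def[symmetric]
    by (simp add: field_simps del: of_nat_add of_nat_mult)
  also have "\<dots> \<le> real n ^ k / fact k / real r"
  proof (rule divide_right_mono)
    have "real (n choose k) * fact k \<le> real n ^ k"
      using binomial_fact_pow[of n k] by (metis of_nat_fact of_nat_le_iff of_nat_mult of_nat_power)
    then show "real (n choose k) \<le> real n ^ k / fact k"
      by (simp add: field_simps)
  qed simp
  also have "\<dots> = real r ^ k / fact r * (1 + real h) ^ k"
  proof -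
    have "real n ^ k = real r ^ k * (1 + real h) ^ k"
      by (simp add: n_def algebra_simps flip: power_mult_distrib)
    moreover have "(fact r :: real) = real r * fact k"
      unfolding k by simp
    ultimately show ?thesis
      using assms by (simp add: field_simps)
  qed
  finally show ?thesis
    using k by simp
qed

section \<open>Lattice paths\<close>

definition path_end :: "bool list \<Rightarrow> int" where
  "path_end w = (\<Sum>b\<leftarrow>w. if b then 1 else -1)"

lemma path_end_simps [simp]:
  "path_end [] = 0"
  "path_end (b # w) = (if b then 1 else -1) + path_end w"
  "path_end (v @ w) = path_end v + path_end w"
  unfolding path_end_def by simp_all

lemma path_end_replicate [simp]:
  "path_end (replicate n True) = int n"
  "path_end (replicate n False) = - int n"
  by (induction n) auto

lemma path_end_without_True: "True \<notin> set w \<Longrightarrow> path_end w = - int (length w)"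
  by (induction w) auto

lemma path_pos_eq_path_end: "path_pos S k = path_end (take k S)"
  unfolding path_pos_def path_end_def by simp

definition height_le :: "nat \<Rightarrow> bool list \<Rightarrow> bool" where
  "height_le h w \<longleftrightarrow> (\<exists>lo. \<forall>k. lo \<le> path_end (take k w) \<and> path_end (take k w) \<le> lo + int h)"

lemma height_le_lp_height: "height_le (lp_height S) S"
proof -
  let ?V = "path_pos S ` {0..length S}"
  have bounds: "Min ?V \<le> path_end (take k S) \<and> path_end (take k S) \<le> Max ?V" for k
  proof -
    have "path_pos S (min k (length S)) \<in> ?V"
      by simp
    moreover have "take (min k (length S)) S = take k S"
      by (simp add: min_def)
    ultimately show ?thesis
      by (simp add: path_pos_eq_path_end)
  qed
  have "Min ?V \<le> Max ?V"
    by simp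
  then have "int (lp_height S) = Max ?V - Min ?V"
    unfolding lp_height_def by simp
  then have "Min ?V \<le> path_end (take k S) \<and> path_end (take k S) \<le> Min ?V + int (lp_height S)" for k
    using bounds[of k] by linarith
  then show ?thesis
    unfolding height_le_def by blast
qed

lemma height_le_take: "height_le h w \<Longrightarrow> height_le h (take n w)"
  unfolding height_le_def by (metis take_take)

lemma height_le_drop:
  assumes "height_le h w"
  shows "height_le h (drop n w)"
proof -
  obtain lo where lo: "\<And>k. lo \<le> path_end (take k w) \<and> path_end (take k w) \<le> lo + int h"
    using assms unfolding height_le_def by blast
  have "lo - path_end (take n w) \<le> path_end (take k (drop n w)) \<and>
      path_end (take k (drop n w)) \<le> lo - path_end (take n w) + int h" for k
    using lo[of "n + k"] by (simp add: take_add)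
  then show ?thesis
    unfolding height_le_def by blast
qed

lemma height_le_rotate:
  assumes closed: "path_end (u @ v) = 0" and "height_le h (u @ v)"
  shows "height_le h (v @ u)"
proof -
  obtain lo where lo: "\<And>k. lo \<le> path_end (take k (u @ v)) \<and> path_end (take k (u @ v)) \<le> lo + int h"
    using assms(2) unfolding height_le_def by blast
  have "lo - path_end u \<le> path_end (take k (v @ u)) \<and>
      path_end (take k (v @ u)) \<le> lo - path_end u + int h" for k
  proof (cases "k \<le> length v")
    case True
    then have "path_end (take (length u + k) (u @ v)) = path_end u + path_end (take k (v @ u))"
      by simp
    then show ?thesis
      using lo[of "length u + k"] by linarith
  next
    case False
    define j where "j = min (k - length v) (length u)"
    have "take j (u @ v) = take (k - length v) u"
      unfolding j_def by (simp add: min_def)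
    moreover have "take k (v @ u) = v @ take (k - length v) u"
      using False by simp
    moreover have "path_end v = - path_end u"
      using closed by simp
    ultimately have "path_end (take j (u @ v)) = path_end u + path_end (take k (v @ u))"
      by simp
    then show ?thesis
      using lo[of j] by linarith
  qed
  then show ?thesis
    unfolding height_le_def by (intro exI[of _ "lo - path_end u"]) blast
qed

lemma height_le_leading_run:
  assumes "height_le h (replicate n True @ w)"
  shows "n \<le> h"
proof -
  obtain lo where "\<And>k. lo \<le> path_end (take k (replicate n True @ w)) \<and>
      path_end (take k (replicate n True @ w)) \<le> lo + int h"
    using assms unfolding height_le_def by blast
  from this[of 0] this[of n] show ?thesis
    by simp
qed

fun true_runs :: "bool list \<Rightarrow> nat" where
  "true_runs [] = 0"
| "true_runs (b # w) = (if b \<and> (w = [] \<or> \<not> hd w) then 1 else 0) + true_runs w"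

lemma true_runs_append_False: "true_runs (v @ False # w) = true_runs v + true_runs w"
  by (induction v) (auto simp: hd_append split: list.split)

lemma true_runs_append_last_False:
  assumes "v \<noteq> []" "\<not> last v"
  shows "true_runs (v @ w) = true_runs v + true_runs w"
proof -
  have v: "v = butlast v @ [False]"
    using assms by (metis append_butlast_last_id)
  have "true_runs (v @ w) = true_runs (butlast v) + true_runs w"
    by (subst v) (simp add: true_runs_append_False)
  moreover have "true_runs v = true_runs (butlast v)"
    by (subst v) (simp add: true_runs_append_False)
  ultimately show ?thesis
    by simp
qed

lemma true_runs_replicate_False [simp]: "true_runs (replicate n False) = 0"
  by (induction n) auto

lemma true_runs_replicate_False_append [simp]: "true_runs (replicate m False @ w) = true_runs w"
  by (induction m) auto

lemma true_runs_append_replicate_False [simp]: "true_runs (w @ replicate m False) = true_runs w"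
  by (cases m) (simp_all add: true_runs_append_False)

lemma true_runs_pos: "True \<in> set w \<Longrightarrow> true_runs w > 0"
  by (induction w) (auto, metis list.set_sel(1))

lemma true_runs_leading_run:
  assumes "n > 0" "w = [] \<or> \<not> hd w"
  shows "true_runs (replicate n True @ w) = Suc (true_runs w)"
  using assms by (induction n) (auto simp: hd_append)

lemma true_runs_take_less:
  assumes "t1 < t2" "t2 \<le> length w" "\<not> w ! t1" "path_end (take t1 w) = path_end (take t2 w)"
  shows "true_runs (take t1 w) < true_runs (take t2 w)"
proof -
  define e where "e = take (t2 - Suc t1) (drop (Suc t1) w)"
  have "t1 < length w"
    using assms(1,2) by simp
  then have "drop t1 w = False # drop (Suc t1) w"
    using assms(3) Cons_nth_drop_Suc[of t1 w] by simp
  moreover have "t2 - t1 = Suc (t2 - Suc t1)"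
    using assms(1) by simp
  ultimately have "take (t2 - t1) (drop t1 w) = False # e"
    unfolding e_def by simp
  moreover have "take t2 w = take t1 w @ take (t2 - t1) (drop t1 w)"
    using assms(1) take_add[of t1 "t2 - t1" w] by simp
  ultimately have split: "take t2 w = take t1 w @ False # e"
    by simp
  then have "path_end e = 1"
    using assms(4) by simp
  then have "True \<in> set e"
    using path_end_without_True[of e] by fastforce
  then show ?thesis
    using split true_runs_pos[of e] by (simp add: true_runs_append_False)
qed

lemma split_leading_run:
  obtains n v where "w = replicate n b @ v" "v = [] \<or> hd v \<noteq> b"
proof
  show "w = replicate (length (takeWhile (\<lambda>x. x = b) w)) b @ dropWhile (\<lambda>x. x = b) w"
    by (metis (full_types) replicate_length_same set_takeWhileD takeWhile_dropWhile_id)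
  show "dropWhile (\<lambda>x. x = b) w = [] \<or> hd (dropWhile (\<lambda>x. x = b) w) \<noteq> b"
    using hd_dropWhile by blast
qed

lemma run_word_Suc:
  "run_word (Suc r) n m = run_word r n m @ replicate (n r) True @ replicate (m r) False"
  by (simp add: run_word_def)

lemma path_end_run_word: "path_end (run_word r n m) = int (\<Sum>j<r. n j) - int (\<Sum>j<r. m j)"
  by (induction r) (simp_all add: run_word_def)

lemma true_runs_run_word:
  assumes "\<forall>j<r. n j \<ge> 1 \<and> m j \<ge> 1"
  shows "true_runs (run_word r n m) = r"
  using assms
proof (induction r)
  case (Suc r)
  have "true_runs (replicate (n r) True @ replicate (m r) False) = 1"
    using true_runs_leading_run[of "n r" "replicate (m r) False"] Suc.prems by (cases "m r") auto
  moreover have "run_word r n m = [] \<or> \<not> last (run_word r n m)"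
  proof (cases r)
    case (Suc r')
    then have "m r' \<noteq> 0"
      using Suc.prems by (auto dest: spec[of _ r'])
    then obtain k where "m r' = Suc k"
      using not0_implies_Suc by blast
    then show ?thesis
      using Suc by (simp add: run_word_Suc last_append)
  qed (simp add: run_word_def)
  then have "true_runs (run_word r n m @ v) = true_runs (run_word r n m) + true_runs v" for v
    using true_runs_append_last_False by (cases "run_word r n m = []") auto
  ultimately show ?case
    using Suc by (simp add: run_word_Suc)
qed (simp add: run_word_def)

section \<open>Non-crossing pairings\<close>

lemma NC2D:
  assumes "P \<in> NC2 w"
  shows "\<And>a b. (a, b) \<in> P \<Longrightarrow> a < b \<and> b < length w \<and> w ! a \<noteq> w ! b"
    and "\<And>k. k < length w \<Longrightarrow> \<exists>!p. p \<in> P \<and> (fst p = k \<or> snd p = k)"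
    and "\<And>a b c d. (a, b) \<in> P \<Longrightarrow> (c, d) \<in> P \<Longrightarrow> \<not> (a < c \<and> c < b \<and> b < d)"
  using assms unfolding NC2_def by blast+

lemma NC2I:
  assumes "\<And>a b. (a, b) \<in> P \<Longrightarrow> a < b \<and> b < length w \<and> w ! a \<noteq> w ! b"
    and "\<And>k. k < length w \<Longrightarrow> \<exists>!p. p \<in> P \<and> (fst p = k \<or> snd p = k)"
    and "\<And>a b c d. (a, b) \<in> P \<Longrightarrow> (c, d) \<in> P \<Longrightarrow> \<not> (a < c \<and> c < b \<and> b < d)"
  shows "P \<in> NC2 w"
  using assms unfolding NC2_def by auto

lemma NC2_unique:
  assumes "P \<in> NC2 w" "p \<in> P" "q \<in> P" "fst p = k \<or> snd p = k" "fst q = k \<or> snd q = k"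
  shows "p = q"
proof -
  have "k < length w"
    using assms(2,4) NC2D(1)[OF assms(1), of "fst p" "snd p"] by auto
  then show ?thesis
    using NC2D(2)[OF assms(1)] assms(2-5) by blast
qed

lemma finite_NC2: "finite (NC2 w)"
proof (rule finite_subset)
  show "NC2 w \<subseteq> Pow ({..<length w} \<times> {..<length w})"
    using NC2D(1) by fastforce
qed simp

lemma NC2_Nil: "NC2 [] = {{}}"
  unfolding NC2_def by auto

definition window_pairs :: "nat \<Rightarrow> nat \<Rightarrow> (nat \<times> nat) set \<Rightarrow> (nat \<times> nat) set" where
  "window_pairs off len P =
    (\<lambda>(a, b). (a - off, b - off)) ` {p \<in> P. off \<le> fst p \<and> snd p < off + len}"

definition shift_pairs :: "nat \<Rightarrow> (nat \<times> nat) set \<Rightarrow> (nat \<times> nat) set" where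
  "shift_pairs d Q = (\<lambda>(a, b). (a + d, b + d)) ` Q"

lemma NC2_window_pairs:
  assumes P: "P \<in> NC2 w" and len: "off + len \<le> length w"
    and closed: "\<And>a b. (a, b) \<in> P \<Longrightarrow> off \<le> a \<and> a < off + len \<or> off \<le> b \<and> b < off + len \<Longrightarrow>
      off \<le> a \<and> b < off + len"
  shows "window_pairs off len P \<in> NC2 (take len (drop off w))"
proof (rule NC2I)
  have L: "length (take len (drop off w)) = len"
    using len by simp
  fix x y assume "(x, y) \<in> window_pairs off len P"
  then obtain a b where ab: "(a, b) \<in> P" "off \<le> a" "b < off + len" "x = a - off" "y = b - off"
    unfolding window_pairs_def by auto
  have "a < b \<and> b < length w \<and> w ! a \<noteq> w ! b"
    using NC2D(1)[OF P ab(1)] .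
  then show "x < y \<and> y < length (take len (drop off w)) \<and>
      take len (drop off w) ! x \<noteq> take len (drop off w) ! y"
    using ab L len by (auto simp: nth_take nth_drop)
next
  fix k assume k: "k < length (take len (drop off w))"
  then have k': "k < len" "off + k < length w"
    using len by auto
  obtain p where p: "p \<in> P" "fst p = off + k \<or> snd p = off + k"
    using NC2D(2)[OF P k'(2)] by blast
  obtain a b where pab: "p = (a, b)"
    by (cases p)
  have inside: "off \<le> a \<and> b < off + len"
    using closed[of a b] p pab k' by auto
  have mem: "(a - off, b - off) \<in> window_pairs off len P"
    unfolding window_pairs_def using p pab inside by force
  show "\<exists>!q. q \<in> window_pairs off len P \<and> (fst q = k \<or> snd q = k)"
  proof (rule ex1I[of _ "(a - off, b - off)"])
    show "(a - off, b - off) \<in> window_pairs off len P \<and>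
        (fst (a - off, b - off) = k \<or> snd (a - off, b - off) = k)"
      using mem p pab inside by auto
  next
    fix q assume q: "q \<in> window_pairs off len P \<and> (fst q = k \<or> snd q = k)"
    then obtain a' b'
      where ab': "(a', b') \<in> P" "off \<le> a'" "b' < off + len" "q = (a' - off, b' - off)"
      unfolding window_pairs_def by auto
    have "a' < b'"
      using NC2D(1)[OF P ab'(1)] by simp
    then have "fst (a', b') = off + k \<or> snd (a', b') = off + k"
      using q ab' by auto
    then have "(a', b') = p"
      using NC2_unique[OF P ab'(1) p(1)] p(2) by blast
    then show "q = (a - off, b - off)"
      using ab' pab by simp
  qed
next
  fix x y u v assume "(x, y) \<in> window_pairs off len P" "(u, v) \<in> window_pairs off len P"
  then obtain a b c d where "(a, b) \<in> P" "off \<le> a" "x = a - off" "y = b - off"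
      "(c, d) \<in> P" "off \<le> c" "u = c - off" "v = d - off"
    unfolding window_pairs_def by auto
  moreover have "a < b" "c < d"
    using NC2D(1)[OF P] calculation by blast+
  ultimately show "\<not> (x < u \<and> u < y \<and> y < v)"
    using NC2D(3)[OF P, of a b c d] by auto
qed

lemma shift_window_pairs:
  assumes P: "P \<in> NC2 w"
  shows "shift_pairs off (window_pairs off len P) = {p \<in> P. off \<le> fst p \<and> snd p < off + len}"
proof -
  have "fst p < snd p" if "p \<in> P" for p
    using NC2D(1)[OF P, of "fst p" "snd p"] that by simp
  then show ?thesis
    unfolding shift_pairs_def window_pairs_def image_image
    by (force simp: case_prod_beta intro: image_eqI)
qed

lemma NC2_Cons_cases:
  assumes P: "P \<in> NC2 (c # w)"
  obtains s A B where "s < length w" "w ! s \<noteq> c" "A \<in> NC2 (take s w)" "B \<in> NC2 (drop (Suc s) w)"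
    "P = insert (0, Suc s) (shift_pairs 1 A \<union> shift_pairs (Suc (Suc s)) B)"
proof -
  obtain p where p: "p \<in> P" "fst p = 0 \<or> snd p = 0"
    using NC2D(2)[OF P, of 0] by auto
  then obtain s where s: "p = (0, Suc s)"
    using NC2D(1)[OF P, of "fst p" "snd p"] by (cases p) (auto simp: gr0_conv_Suc)
  have ps: "(0, Suc s) \<in> P" "s < length w" "w ! s \<noteq> c"
    using NC2D(1)[OF P, of 0 "Suc s"] p s by auto
  have outer: "(a, b) = (0, Suc s) \<or> 0 < a \<and> b < Suc s \<or> Suc s < a" if ab: "(a, b) \<in> P" for a b
  proof (cases "a = 0 \<or> a = Suc s \<or> b = Suc s")
    case True
    then show ?thesis
      using NC2_unique[OF P ab ps(1)] by fastforce
  next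
    case False
    then show ?thesis
      using NC2D(3)[OF P ps(1) ab] NC2D(1)[OF P ab] by auto
  qed
  have "window_pairs 1 s P \<in> NC2 (take s (drop 1 (c # w)))"
    by (rule NC2_window_pairs[OF P]) (use ps(2) outer NC2D(1)[OF P] in fastforce)+
  moreover have "window_pairs (Suc (Suc s)) (length w - Suc s) P
      \<in> NC2 (take (length w - Suc s) (drop (Suc (Suc s)) (c # w)))"
    by (rule NC2_window_pairs[OF P]) (use ps(2) outer NC2D(1)[OF P] in fastforce)+
  moreover have "P = insert (0, Suc s)
      (shift_pairs 1 (window_pairs 1 s P) \<union>
       shift_pairs (Suc (Suc s)) (window_pairs (Suc (Suc s)) (length w - Suc s) P))"
  proof -
    have "b < Suc (length w)" if "(a, b) \<in> P" for a b
      using NC2D(1)[OF P that] by simp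
    then show ?thesis
      unfolding shift_window_pairs[OF P] using ps(1) outer by fastforce
  qed
  ultimately show ?thesis
    using that ps(2,3) by simp
qed

lemma path_end_NC2: "P \<in> NC2 w \<Longrightarrow> path_end w = 0"
proof (induction "length w" arbitrary: w P rule: less_induct)
  case less
  show ?case
  proof (cases w)
    case (Cons c v)
    obtain s A B where s: "s < length v" "v ! s \<noteq> c" "A \<in> NC2 (take s v)" "B \<in> NC2 (drop (Suc s) v)"
      using NC2_Cons_cases less.prems Cons by metis
    have "path_end (take s v) = 0" "path_end (drop (Suc s) v) = 0"
      using less.hyps s(3,4) Cons by auto
    moreover have "v = take s v @ v ! s # drop (Suc s) v"
      using id_take_nth_drop[OF s(1)] .
    then have "path_end v =
        path_end (take s v) + (if v ! s then 1 else -1) + path_end (drop (Suc s) v)"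
      by (metis path_end_simps(2,3) add.assoc)
    ultimately show ?thesis
      using Cons s(2) by (cases c) auto
  qed simp
qed

lemma card_NC2_Cons_le:
  "card (NC2 (c # w)) \<le> (\<Sum>s | s < length w \<and> w ! s \<noteq> c \<and> path_end (take s w) = 0.
     card (NC2 (take s w)) * card (NC2 (drop (Suc s) w)))"
proof -
  let ?I = "{s. s < length w \<and> w ! s \<noteq> c \<and> path_end (take s w) = 0}"
  let ?glue = "\<lambda>s (A, B). insert (0, Suc s) (shift_pairs 1 A \<union> shift_pairs (Suc (Suc s)) B)"
  let ?parts = "\<lambda>s. NC2 (take s w) \<times> NC2 (drop (Suc s) w)"
  have "NC2 (c # w) \<subseteq> (\<Union>s\<in>?I. ?glue s ` ?parts s)"
  proof
    fix P assume "P \<in> NC2 (c # w)"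
    then obtain s A B where "s < length w" "w ! s \<noteq> c" "A \<in> NC2 (take s w)"
        "B \<in> NC2 (drop (Suc s) w)" "P = ?glue s (A, B)"
      by (rule NC2_Cons_cases) simp
    then show "P \<in> (\<Union>s\<in>?I. ?glue s ` ?parts s)"
      using path_end_NC2 by blast
  qed
  then have "card (NC2 (c # w)) \<le> card (\<Union>s\<in>?I. ?glue s ` ?parts s)"
    by (rule card_mono[rotated]) (simp add: finite_NC2)
  also have "\<dots> \<le> (\<Sum>s\<in>?I. card (?glue s ` ?parts s))"
    by (rule card_UN_le) simp
  also have "\<dots> \<le> (\<Sum>s\<in>?I. card (?parts s))"
    by (intro sum_mono card_image_le) (simp add: finite_NC2)
  finally show ?thesis
    by (simp add: card_cartesian_product)
qed

text \<open>Positions after moving the first letter of a word of length L + 1 to its end.\<close>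

definition rotate_pair :: "nat \<Rightarrow> nat \<times> nat \<Rightarrow> nat \<times> nat" where
  "rotate_pair L p = (if fst p = 0 then (snd p - 1, L) else (fst p - 1, snd p - 1))"

lemma inj_on_rotate_pair: "inj_on (rotate_pair L) {(a, b). a < b \<and> b < Suc L}"
  unfolding rotate_pair_def by (rule inj_onI) (auto split: if_splits)

lemma rotate_pair_touches:
  assumes "a < b" "b < Suc L" "k < Suc L"
  shows "fst (rotate_pair L (a, b)) = k \<or> snd (rotate_pair L (a, b)) = k \<longleftrightarrow>
    a = (if k = L then 0 else Suc k) \<or> b = (if k = L then 0 else Suc k)"
  using assms unfolding rotate_pair_def by auto

lemma NC2_rotate:
  assumes P: "P \<in> NC2 (x # w)"
  shows "rotate_pair (length w) ` P \<in> NC2 (w @ [x])"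
proof (rule NC2I)
  let ?L = "length w"
  fix u v assume "(u, v) \<in> rotate_pair ?L ` P"
  then obtain a b where ab: "(a, b) \<in> P" "(u, v) = rotate_pair ?L (a, b)"
    by auto
  have h: "a < b" "b < Suc ?L" "(x # w) ! a \<noteq> (x # w) ! b"
    using NC2D(1)[OF P ab(1)] by auto
  then obtain b' where b': "b = Suc b'"
    by (cases b) auto
  show "u < v \<and> v < length (w @ [x]) \<and> (w @ [x]) ! u \<noteq> (w @ [x]) ! v"
  proof (cases a)
    case 0
    then show ?thesis
      using ab h b' unfolding rotate_pair_def by (auto simp: nth_append)
  next
    case (Suc a')
    then show ?thesis
      using ab h b' unfolding rotate_pair_def by (auto simp: nth_append)
  qed
next
  let ?L = "length w"
  fix k assume "k < length (w @ [x])"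
  then have k: "k < Suc ?L"
    by simp
  define k' where "k' = (if k = ?L then 0 else Suc k)"
  have "k' < length (x # w)"
    unfolding k'_def using k by auto
  then obtain p where p: "p \<in> P" "fst p = k' \<or> snd p = k'"
    using NC2D(2)[OF P] by blast
  obtain a b where pab: "p = (a, b)"
    by (cases p)
  have hab: "a < b" "b < Suc ?L"
    using NC2D(1)[OF P, of a b] p pab by auto
  show "\<exists>!q. q \<in> rotate_pair ?L ` P \<and> (fst q = k \<or> snd q = k)"
  proof (rule ex1I[of _ "rotate_pair ?L (a, b)"])
    show "rotate_pair ?L (a, b) \<in> rotate_pair ?L ` P \<and>
        (fst (rotate_pair ?L (a, b)) = k \<or> snd (rotate_pair ?L (a, b)) = k)"
      using p pab rotate_pair_touches[OF hab k] k'_def by auto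
  next
    fix q assume q: "q \<in> rotate_pair ?L ` P \<and> (fst q = k \<or> snd q = k)"
    then obtain c d where cd: "(c, d) \<in> P" "q = rotate_pair ?L (c, d)"
      by auto
    have hcd: "c < d" "d < Suc ?L"
      using NC2D(1)[OF P cd(1)] by auto
    have "c = k' \<or> d = k'"
      using rotate_pair_touches[OF hcd k] q cd k'_def by auto
    then have "(c, d) = p"
      using NC2_unique[OF P cd(1) p(1), of k'] p(2) by auto
    then show "q = rotate_pair ?L (a, b)"
      using cd pab by simp
  qed
next
  let ?L = "length w"
  fix x1 y1 x2 y2 assume "(x1, y1) \<in> rotate_pair ?L ` P" "(x2, y2) \<in> rotate_pair ?L ` P"
  then obtain a b c d where ab: "(a, b) \<in> P" "(x1, y1) = rotate_pair ?L (a, b)"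
    and cd: "(c, d) \<in> P" "(x2, y2) = rotate_pair ?L (c, d)"
    by fastforce
  have h: "a < b" "b < Suc ?L" "c < d" "d < Suc ?L"
    using NC2D(1)[OF P ab(1)] NC2D(1)[OF P cd(1)] by auto
  show "\<not> (x1 < x2 \<and> x2 < y1 \<and> y1 < y2)"
  proof (cases "a = 0"; cases "c = 0")
    assume "a = 0" "c = 0"
    then have "(a, b) = (c, d)"
      using NC2_unique[OF P ab(1) cd(1), of 0] by auto
    then have "(x1, y1) = (x2, y2)"
      using ab cd by simp
    then show ?thesis
      by simp
  next
    assume "a = 0" "c \<noteq> 0"
    then show ?thesis
      using ab cd h unfolding rotate_pair_def by auto
  next
    assume "a \<noteq> 0" "c = 0"
    moreover have "\<not> (0 < a \<and> a < d \<and> d < b)"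
      using NC2D(3)[OF P cd(1) ab(1)] \<open>c = 0\<close> by simp
    ultimately show ?thesis
      using ab cd h unfolding rotate_pair_def by auto
  next
    assume "a \<noteq> 0" "c \<noteq> 0"
    moreover have "\<not> (a < c \<and> c < b \<and> b < d)"
      using NC2D(3)[OF P ab(1) cd(1)] by simp
    ultimately show ?thesis
      using ab cd h unfolding rotate_pair_def by auto
  qed
qed

lemma card_NC2_Cons_le_snoc: "card (NC2 (x # w)) \<le> card (NC2 (w @ [x]))"
proof (rule card_inj_on_le[OF _ _ finite_NC2])
  let ?U = "{(a, b). a < b \<and> b < Suc (length w)}"
  have "P \<subseteq> ?U" if "P \<in> NC2 (x # w)" for P
    using NC2D(1)[OF that] by fastforce
  then show "inj_on (\<lambda>P. rotate_pair (length w) ` P) (NC2 (x # w))"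
    using inj_on_image_eq_iff[OF inj_on_rotate_pair] by (auto intro!: inj_onI)
  show "(\<lambda>P. rotate_pair (length w) ` P) ` NC2 (x # w) \<subseteq> NC2 (w @ [x])"
    using NC2_rotate by blast
qed

lemma card_NC2_append_le_swap: "card (NC2 (u @ v)) \<le> card (NC2 (v @ u))"
proof (induction u arbitrary: v)
  case (Cons x u)
  have "card (NC2 ((x # u) @ v)) \<le> card (NC2 (u @ v @ [x]))"
    using card_NC2_Cons_le_snoc[of x "u @ v"] by simp
  also have "\<dots> \<le> card (NC2 (v @ x # u))"
    using Cons.IH[of "v @ [x]"] by simp
  finally show ?case .
qed simp

lemma sum_le_sum_inj_image:
  fixes F :: "'a \<Rightarrow> 'b::canonically_ordered_monoid_add"
  assumes "finite K" "inj_on \<rho> J" "\<rho> ` J \<subseteq> K" "\<And>t. t \<in> J \<Longrightarrow> F t \<le> g (\<rho> t)"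
  shows "sum F J \<le> sum g K"
proof -
  have "sum F J \<le> sum (g \<circ> \<rho>) J"
    using assms(4) by (intro sum_mono) simp
  also have "\<dots> = sum g (\<rho> ` J)"
    by (simp add: sum.reindex[OF assms(2)])
  also have "\<dots> \<le> sum g K"
    using assms(1,3) by (intro sum_mono2) auto
  finally show ?thesis .
qed

lemma card_NC2_leading_ones_le:
  "card (NC2 (replicate (Suc k) True @ w)) \<le>
    (\<Sum>t | t < length w \<and> \<not> w ! t \<and> path_end (take t w) = - int k.
      card (NC2 (replicate k True @ take t w)) * card (NC2 (drop (Suc t) w)))"
proof -
  let ?v = "replicate k True @ w"
  let ?J = "{t. t < length w \<and> \<not> w ! t \<and> path_end (take t w) = - int k}"
  have "{s. s < length ?v \<and> ?v ! s \<noteq> True \<and> path_end (take s ?v) = 0} = (+) k ` ?J"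
  proof (intro set_eqI iffI)
    fix s assume s: "s \<in> {s. s < length ?v \<and> ?v ! s \<noteq> True \<and> path_end (take s ?v) = 0}"
    then have "\<not> s < k"
      by (auto simp: nth_append)
    then obtain t where "s = k + t"
      using le_Suc_ex not_less by blast
    then show "s \<in> (+) k ` ?J"
      using s by (auto simp: nth_append)
  qed (auto simp: nth_append)
  then have "card (NC2 (True # ?v)) \<le>
      (\<Sum>t\<in>?J. card (NC2 (take (k + t) ?v)) * card (NC2 (drop (Suc (k + t)) ?v)))"
    using card_NC2_Cons_le[of True ?v] by (simp add: sum.reindex)
  then show ?thesis
    by simp
qed

lemma card_NC2_leading_ones_step:
  assumes IH: "\<And>k' v. k' + length v < Suc k + length w \<Longrightarrow> path_end (replicate k' True @ v) = 0 \<Longrightarrow>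
      height_le h (replicate k' True @ v) \<Longrightarrow>
      card (NC2 (replicate k' True @ v)) \<le> raney h (Suc k') (true_runs v)"
    and closed: "path_end (replicate (Suc k) True @ w) = 0"
    and height: "height_le h (replicate (Suc k) True @ w)"
  shows "card (NC2 (replicate (Suc k) True @ w)) \<le> raney h (Suc (Suc k)) (true_runs w)"
proof -
  define J where "J = {t. t < length w \<and> \<not> w ! t \<and> path_end (take t w) = - int k}"
  define F
    where "F t = card (NC2 (replicate k True @ take t w)) * card (NC2 (drop (Suc t) w))" for t
  define g where "g j = raney h (Suc k) j * raney h 1 (true_runs w - j)" for j
  have F_le: "F t \<le> g (true_runs (take t w)) \<and> true_runs (take t w) \<le> true_runs w" if "t \<in> J" for t
  proof -
    have t: "t < length w" "\<not> w ! t" "path_end (take t w) = - int k"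
      using that unfolding J_def by auto
    have split: "w = take t w @ False # drop (Suc t) w"
      using id_take_nth_drop[OF t(1)] t(2) by simp
    then have runs: "true_runs w = true_runs (take t w) + true_runs (drop (Suc t) w)"
      by (metis true_runs_append_False)
    have "path_end w = path_end (take t w) - 1 + path_end (drop (Suc t) w)"
      using arg_cong[OF split, of path_end] by simp
    then have "path_end (drop (Suc t) w) = 0"
      using closed t(3) by simp
    then have outer: "card (NC2 (drop (Suc t) w)) \<le> raney h 1 (true_runs (drop (Suc t) w))"
      using IH[of 0 "drop (Suc t) w"] height_le_drop[OF height, of "Suc k + Suc t"] by simp
    have "replicate k True @ take t w = take (k + t) (drop 1 (replicate (Suc k) True @ w))"
      by simp
    then have "height_le h (replicate k True @ take t w)"
      using height_le_take[OF height_le_drop[OF height]] by metis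
    then have inner:
        "card (NC2 (replicate k True @ take t w)) \<le> raney h (Suc k) (true_runs (take t w))"
      using IH[of k "take t w"] t by simp
    show ?thesis
      using mult_le_mono[OF inner outer] runs unfolding F_def g_def by simp
  qed
  have "strict_mono_on J (\<lambda>t. true_runs (take t w))"
    by (rule strict_mono_onI, rule true_runs_take_less) (auto simp: J_def)
  then have inj: "inj_on (\<lambda>t. true_runs (take t w)) J"
    by (rule strict_mono_on_imp_inj_on)
  have "card (NC2 (replicate (Suc k) True @ w)) \<le> sum F J"
    using card_NC2_leading_ones_le unfolding F_def J_def .
  also have "\<dots> \<le> sum g {..true_runs w}"
    by (rule sum_le_sum_inj_image[OF _ inj]) (use F_le in auto)
  also have "\<dots> = raney h (Suc (Suc k)) (true_runs w)"
    using raney_convolution[of h "Suc k" 1] unfolding g_def by simp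
  finally show ?thesis .
qed

text \<open>The hypothesis is the bound for words beginning with 1; a closed word is rotated into
  that form.\<close>

lemma card_NC2_closed_le:
  assumes leading_ones: "\<And>k v. Suc k + length v = length w \<Longrightarrow>
      path_end (replicate (Suc k) True @ v) = 0 \<Longrightarrow> height_le h (replicate (Suc k) True @ v) \<Longrightarrow>
      card (NC2 (replicate (Suc k) True @ v)) \<le> raney h (Suc (Suc k)) (true_runs v)"
    and closed: "path_end w = 0" and height: "height_le h w"
  shows "card (NC2 w) \<le> raney h 1 (true_runs w)"
proof -
  obtain m u where w: "w = replicate m False @ u" and u: "u = [] \<or> hd u"
    by (rule split_leading_run[of w False]) simp
  show ?thesis
  proof (cases "u = []")
    case True
    then show ?thesis
      using closed w by (simp add: NC2_Nil)
  next
    case False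
    obtain n v where uv: "u @ replicate m False = replicate n True @ v" and v: "v = [] \<or> \<not> hd v"
      by (rule split_leading_run[of _ True]) simp
    obtain k where n: "n = Suc k"
      using False u uv v by (cases n) (auto simp: hd_append)
    have closed': "path_end (replicate n True @ v) = 0"
      using closed w arg_cong[OF uv, of path_end] by simp
    have height': "height_le h (replicate n True @ v)"
      using height_le_rotate[of "replicate m False" u] closed height w uv by simp
    have "card (NC2 w) \<le> card (NC2 (replicate n True @ v))"
      using card_NC2_append_le_swap[of "replicate m False" u] w uv by simp
    also have "\<dots> \<le> raney h (Suc n) (true_runs v)"
      using leading_ones[of k v] closed' height' n w arg_cong[OF uv, of length] by simp
    also have "\<dots> \<le> raney h (Suc h) (true_runs v)"
      using height_le_leading_run[OF height'] by (simp add: raney_mono)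
    also have "\<dots> = raney h 1 (true_runs (replicate n True @ v))"
      using true_runs_leading_run[of n v] n v by simp
    also have "\<dots> = raney h 1 (true_runs w)"
      using w arg_cong[OF uv, of true_runs] by simp
    finally show ?thesis .
  qed
qed

lemma card_NC2_le_raney:
  assumes "path_end (replicate k True @ w) = 0" and "height_le h (replicate k True @ w)"
  shows "card (NC2 (replicate k True @ w)) \<le> raney h (Suc k) (true_runs w)"
  using assms
proof (induction "k + length w" arbitrary: k w rule: less_induct)
  case less
  have leading_ones:
      "card (NC2 (replicate (Suc k') True @ v)) \<le> raney h (Suc (Suc k')) (true_runs v)"
    if "Suc k' + length v = k + length w" "path_end (replicate (Suc k') True @ v) = 0"
      "height_le h (replicate (Suc k') True @ v)" for k' v
    using that(2,3) by (rule card_NC2_leading_ones_step[rotated]) (use less.hyps that(1) in simp)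
  show ?case
  proof (cases k)
    case 0
    then show ?thesis
      using card_NC2_closed_le[of w h] leading_ones less.prems by simp
  next
    case (Suc k')
    then show ?thesis
      using leading_ones[of k' w] less.prems by simp
  qed
qed

theorem lemma3p4:
  fixes r :: nat and n m :: "nat \<Rightarrow> nat"
  assumes "r \<ge> 1"
    and "\<forall>j<r. n j \<ge> 1 \<and> m j \<ge> 1"
    and "(\<Sum>j<r. n j) = (\<Sum>j<r. m j)"
  shows "real (card (NC2 (run_word r n m))) \<le> fuss_catalan (lp_height (run_word r n m)) r
       \<and> fuss_catalan (lp_height (run_word r n m)) r
           \<le> real r ^ (r - 1) / fact r * (1 + real (lp_height (run_word r n m))) ^ (r - 1)"
proof
  let ?S = "run_word r n m"
  let ?h = "lp_height ?S"
  have "card (NC2 (replicate 0 True @ ?S)) \<le> raney ?h (Suc 0) (true_runs ?S)"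
    by (rule card_NC2_le_raney) (simp_all add: path_end_run_word assms(3) height_le_lp_height)
  then show "real (card (NC2 ?S)) \<le> fuss_catalan ?h r"
    using true_runs_run_word[OF assms(2)] raney_one_eq_fuss_catalan[of ?h r] by simp
  show "fuss_catalan ?h r \<le> real r ^ (r - 1) / fact r * (1 + real ?h) ^ (r - 1)"
    by (rule fuss_catalan_le[OF assms(1)])
qed

end
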